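(* Let $G$ be a finite group. Then there exist $d\ge1$ and $w\in F_d$ with $w(G)=[G,G]$. Moreover, if $G$ is a finite $p$-group, then there exist $d'\ge1$ and $w'\in F_{d'}$ with $w'(G)=\Phi(G)$.
   Context: $F_d$ is the free group on $d$ letters; for $w\in F_d$, $w(G)$ is the image of the word map $G^d\to G$ given by evaluating $w$. $\Phi(G)$ is the Frattini subgroup. *)

theory Defs
  imports "HOL-Algebra.Algebra"
begin

text \<open>Elements of the free group F_d are represented by words: lists of letters (i, b)
  with i < d, where (i, True) stands for the generator x_i and (i, False) for its inverse.
  Every element of F_d is represented by such a list (e.g. its reduced form), and the word
  map only depends on the element of F_d, so the image of the word map is well defined.\<close>

definition free_word :: "nat \<Rightarrow> (nat \<times> bool) list \<Rightarrow> bool" where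
  "free_word d w \<longleftrightarrow> (\<forall>l \<in> set w. fst l < d)"

definition letter_eval :: "('a, 'b) monoid_scheme \<Rightarrow> (nat \<Rightarrow> 'a) \<Rightarrow> nat \<times> bool \<Rightarrow> 'a" where
  "letter_eval G g l = (if snd l then g (fst l) else inv\<^bsub>G\<^esub> (g (fst l)))"

definition word_eval :: "('a, 'b) monoid_scheme \<Rightarrow> (nat \<Rightarrow> 'a) \<Rightarrow> (nat \<times> bool) list \<Rightarrow> 'a" where
  "word_eval G g w = foldr (\<lambda>l acc. letter_eval G g l \<otimes>\<^bsub>G\<^esub> acc) w \<one>\<^bsub>G\<^esub>"

definition word_image :: "('a, 'b) monoid_scheme \<Rightarrow> nat \<Rightarrow> (nat \<times> bool) list \<Rightarrow> 'a set" where
  "word_image G d w = {word_eval G g w | g. g \<in> {..<d} \<rightarrow> carrier G}"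

definition maximal_subgroup :: "'a set \<Rightarrow> ('a, 'b) monoid_scheme \<Rightarrow> bool" where
  "maximal_subgroup H G \<longleftrightarrow> subgroup H G \<and> H \<noteq> carrier G \<and>
     (\<forall>K. subgroup K G \<and> H \<subseteq> K \<and> K \<noteq> carrier G \<longrightarrow> K = H)"

text \<open>Frattini subgroup: intersection of all maximal subgroups (= G if there are none).\<close>
definition frattini :: "('a, 'b) monoid_scheme \<Rightarrow> 'a set" where
  "frattini G = carrier G \<inter> \<Inter> {H. maximal_subgroup H G}"

definition p_group :: "('a, 'b) monoid_scheme \<Rightarrow> nat \<Rightarrow> bool" where
  "p_group G p \<longleftrightarrow> Factorial_Ring.prime p \<and> finite (carrier G) \<and> (\<exists>n. order G = p ^ n)"

end

theory Submission
  imports Defs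
begin

text \<open>If \<open>\<one> \<in> w(G)\<close> for a finite group \<open>G\<close>, the subgroup generated by \<open>w(G)\<close> is the product
  set \<open>w(G)\<^sup>n\<close> for \<open>n = |G|\<close>, and that is the image of the word \<open>w \<cdot> w \<cdots> w\<close> with the \<open>n\<close> copies
  written in disjoint sets of variables. Applied to the commutator word this yields \<open>[G, G]\<close>.

  For a \<open>p\<close>-group, \<open>\<Phi>(G)\<close> is generated by the image of \<open>x\<^sup>p [y, z]\<close>, i.e. by the \<open>p\<close>-th powers
  and commutators. A maximal subgroup \<open>M\<close> is normal (counting cosets of \<open>M\<close> fixed by \<open>M\<close> shows
  its normalizer is larger), and \<open>G/M\<close> is cyclic, generated by any \<open>g \<notin> M\<close>, with \<open>g\<^sup>p \<in> M\<close>;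
  hence \<open>M\<close> contains all \<open>p\<close>-th powers and commutators. Conversely, given \<open>g\<close> outside the
  subgroup \<open>N\<close> they generate, a subgroup maximal among those containing \<open>N\<close> and avoiding \<open>g\<close>
  is a maximal subgroup of \<open>G\<close>.\<close>

definition shift_word :: "nat \<Rightarrow> (nat \<times> bool) list \<Rightarrow> (nat \<times> bool) list" where
  "shift_word d w = map (\<lambda>(i, b). (i + d, b)) w"

fun power_word :: "nat \<Rightarrow> (nat \<times> bool) list \<Rightarrow> nat \<Rightarrow> (nat \<times> bool) list" where
  "power_word d w 0 = []"
| "power_word d w (Suc n) = w @ shift_word d (power_word d w n)"

fun set_mult_pow :: "('a, 'b) monoid_scheme \<Rightarrow> 'a set \<Rightarrow> nat \<Rightarrow> 'a set" where
  "set_mult_pow G S 0 = {\<one>\<^bsub>G\<^esub>}"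
| "set_mult_pow G S (Suc n) = S <#>\<^bsub>G\<^esub> set_mult_pow G S n"

lemma free_word_Cons [simp]: "free_word d (l # w) \<longleftrightarrow> fst l < d \<and> free_word d w"
  by (simp add: free_word_def)

lemma free_word_append [simp]: "free_word d (u @ v) \<longleftrightarrow> free_word d u \<and> free_word d v"
  by (auto simp: free_word_def)

lemma free_word_Nil [simp]: "free_word d []"
  by (simp add: free_word_def)

lemma free_word_mono: "free_word d w \<Longrightarrow> d \<le> d' \<Longrightarrow> free_word d' w"
  by (auto simp: free_word_def)

lemma free_word_shift: "free_word e w \<Longrightarrow> free_word (d + e) (shift_word d w)"
  by (auto simp: free_word_def shift_word_def)

lemma free_word_power_word: "free_word d w \<Longrightarrow> free_word (n * d) (power_word d w n)"
  by (induction n) (auto intro: free_word_mono free_word_shift)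

context group
begin

lemma word_eval_Nil [simp]: "word_eval G g [] = \<one>"
  by (simp add: word_eval_def)

lemma word_eval_Cons [simp]: "word_eval G g (l # w) = letter_eval G g l \<otimes> word_eval G g w"
  by (simp add: word_eval_def)

lemma word_eval_closed:
  "free_word d w \<Longrightarrow> g \<in> {..<d} \<rightarrow> carrier G \<Longrightarrow> word_eval G g w \<in> carrier G"
  by (induction w) (auto simp: free_word_def letter_eval_def)

lemma word_eval_append:
  assumes "free_word d u" "free_word d v" "g \<in> {..<d} \<rightarrow> carrier G"
  shows "word_eval G g (u @ v) = word_eval G g u \<otimes> word_eval G g v"
  using assms(1)
proof (induction u)
  case (Cons l u)
  then have "letter_eval G g l \<in> carrier G"
    using assms(3) by (auto simp: free_word_def letter_eval_def)
  with Cons show ?case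
    using word_eval_closed[OF _ assms(3)] assms(2) by (simp add: m_assoc)
qed (simp add: word_eval_closed[OF assms(2,3)])

lemma word_eval_cong:
  "free_word d w \<Longrightarrow> (\<And>i. i < d \<Longrightarrow> g i = h i) \<Longrightarrow> word_eval G g w = word_eval G h w"
  by (induction w) (auto simp: free_word_def letter_eval_def)

lemma word_eval_shift: "word_eval G g (shift_word d w) = word_eval G (\<lambda>i. g (i + d)) w"
  by (induction w) (auto simp: shift_word_def letter_eval_def)

lemma word_imageI: "g \<in> {..<d} \<rightarrow> carrier G \<Longrightarrow> word_eval G g w \<in> word_image G d w"
  by (auto simp: word_image_def)

lemma word_imageE:
  assumes "x \<in> word_image G d w"
  obtains g where "g \<in> {..<d} \<rightarrow> carrier G" "x = word_eval G g w"
  using assms by (auto simp: word_image_def)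

lemma word_image_subset_carrier: "free_word d w \<Longrightarrow> word_image G d w \<subseteq> carrier G"
  by (auto elim: word_imageE simp: word_eval_closed)

lemma word_image_append_shift:
  assumes u: "free_word d u" and v: "free_word e v"
  shows "word_image G (d + e) (u @ shift_word d v) = word_image G d u <#> word_image G e v"
proof (intro equalityI subsetI)
  have u': "free_word (d + e) u" and v': "free_word (d + e) (shift_word d v)"
    using free_word_mono[OF u] free_word_shift[OF v] by auto
  fix x assume "x \<in> word_image G (d + e) (u @ shift_word d v)"
  then obtain g where g: "g \<in> {..<d + e} \<rightarrow> carrier G" and x: "x = word_eval G g (u @ shift_word d v)"
    by (rule word_imageE)
  have "x = word_eval G g u \<otimes> word_eval G (\<lambda>i. g (i + d)) v"
    using x word_eval_append[OF u' v' g] by (simp add: word_eval_shift)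
  moreover have "word_eval G g u \<in> word_image G d u"
    using g by (intro word_imageI) auto
  moreover have "word_eval G (\<lambda>i. g (i + d)) v \<in> word_image G e v"
    using g by (intro word_imageI) auto
  ultimately show "x \<in> word_image G d u <#> word_image G e v"
    by (auto simp: set_mult_def)
next
  fix x assume "x \<in> word_image G d u <#> word_image G e v"
  then obtain f h where f: "f \<in> {..<d} \<rightarrow> carrier G" and h: "h \<in> {..<e} \<rightarrow> carrier G"
    and x: "x = word_eval G f u \<otimes> word_eval G h v"
    by (auto simp: set_mult_def elim!: word_imageE)
  define g where "g i = (if i < d then f i else h (i - d))" for i
  have g: "g \<in> {..<d + e} \<rightarrow> carrier G"
    using f h by (auto simp: g_def Pi_iff)
  have "word_eval G g (u @ shift_word d v) = word_eval G g u \<otimes> word_eval G (\<lambda>i. g (i + d)) v"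
    using word_eval_append[OF free_word_mono[OF u] free_word_shift[OF v] g] by (simp add: word_eval_shift)
  also have "\<dots> = x"
    using x word_eval_cong[OF u, of g f] by (simp add: g_def)
  finally show "x \<in> word_image G (d + e) (u @ shift_word d v)"
    using word_imageI[OF g] by metis
qed

lemma word_image_power_word:
  "free_word d w \<Longrightarrow> word_image G (n * d) (power_word d w n) = set_mult_pow G (word_image G d w) n"
proof (induction n)
  case 0
  then show ?case by (auto simp: word_image_def)
next
  case (Suc n)
  then show ?case
    using word_image_append_shift[OF Suc.prems free_word_power_word[OF Suc.prems, of n]] by simp
qed

lemma set_mult_pow_subset_carrier: "S \<subseteq> carrier G \<Longrightarrow> set_mult_pow G S n \<subseteq> carrier G"
  by (induction n) (auto simp: set_mult_def)

lemma set_mult_pow_add: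
  "S \<subseteq> carrier G \<Longrightarrow> set_mult_pow G S m <#> set_mult_pow G S n = set_mult_pow G S (m + n)"
proof (induction m)
  case 0
  then show ?case using set_mult_pow_subset_carrier[of S n] by (force simp: set_mult_def)
next
  case (Suc m)
  then show ?case by (simp add: set_mult_assoc set_mult_pow_subset_carrier)
qed

lemma set_mult_pow_Suc_mono:
  "S \<subseteq> carrier G \<Longrightarrow> \<one> \<in> S \<Longrightarrow> set_mult_pow G S n \<subseteq> set_mult_pow G S (Suc n)"
  using set_mult_pow_subset_carrier[of S n] by (force simp: set_mult_def)

lemma nat_pow_in_set_mult_pow: "s \<in> S \<Longrightarrow> S \<subseteq> carrier G \<Longrightarrow> s [^] n \<in> set_mult_pow G S n"
proof (induction n)
  case (Suc n)
  then have "s \<otimes> s [^] n \<in> S <#> set_mult_pow G S n"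
    by (auto simp: set_mult_def)
  moreover have "s [^] Suc n = s \<otimes> s [^] n"
    using Suc.prems by (blast intro: nat_pow_Suc2)
  ultimately show ?case
    by (simp only: set_mult_pow.simps)
qed simp

lemma set_mult_pow_subset_generate: "S \<subseteq> carrier G \<Longrightarrow> set_mult_pow G S n \<subseteq> generate G S"
  by (induction n) (auto simp: set_mult_def intro: generate.one generate.incl generate.eng)

lemma inv_eq_pow_order_minus_one:
  assumes "finite (carrier G)" "x \<in> carrier G"
  shows "inv x = x [^] (order G - 1)"
proof -
  have "order G \<ge> 1"
    using assms by (auto simp: order_def Suc_le_eq card_gt_0_iff)
  then have "x [^] (order G - 1) \<otimes> x = \<one>"
    using pow_order_eq_1[OF assms(2)] by (metis Suc_diff_le diff_Suc_1 nat_pow_Suc)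
  then show ?thesis
    using assms(2) by (simp add: inv_equality)
qed

text \<open>Since \<open>\<one> \<in> S\<close> the powers of \<open>S\<close> increase and stabilise; the limit is closed under
  inverses because in a finite group \<open>inv x\<close> is a positive power of \<open>x\<close>.\<close>
lemma generate_eq_set_mult_pow:
  assumes fin: "finite (carrier G)" and S: "S \<subseteq> carrier G" "\<one> \<in> S"
  shows "generate G S = set_mult_pow G S (card (carrier G))"
proof -
  let ?f = "set_mult_pow G S"
  have "mono ?f"
    using set_mult_pow_Suc_mono[OF S] by (simp add: mono_iff_le_Suc)
  moreover have "finite (range ?f)"
    using set_mult_pow_subset_carrier[OF S(1)] fin
    by (metis finite_Pow_iff finite_subset image_subsetI PowI)
  moreover have "?f (Suc n) = ?f (Suc (Suc n))" if "?f n = ?f (Suc n)" for n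
  proof -
    have "?f (Suc n) = S <#> ?f n" by (simp only: set_mult_pow.simps)
    also have "\<dots> = S <#> ?f (Suc n)" by (simp only: that)
    also have "\<dots> = ?f (Suc (Suc n))" by (simp only: set_mult_pow.simps)
    finally show ?thesis .
  qed
  ultimately have "\<exists>N. (\<forall>n\<le>N. \<forall>m\<le>N. m < n \<longrightarrow> ?f m < ?f n) \<and> (\<forall>n\<ge>N. ?f N = ?f n)"
    by (intro finite_mono_remains_stable_implies_strict_prefix) blast+
  then have union: "?f (card (carrier G)) = (\<Union>n. ?f n)"
    by (rule finite_mono_strict_prefix_implies_finite_fixpoint[OF set_mult_pow_subset_carrier[OF S(1)] fin])
  have "generate G S \<subseteq> (\<Union>n. ?f n)"
  proof
    fix x assume "x \<in> generate G S"
    then show "x \<in> (\<Union>n. ?f n)"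
    proof induction
      case one
      then show ?case by (auto intro: exI[of _ 0])
    next
      case (incl h)
      then have "h \<in> ?f 1"
        using S(1) by (force simp: set_mult_def)
      then show ?case by blast
    next
      case (inv h)
      then have "inv h \<in> ?f (order G - 1)"
        using nat_pow_in_set_mult_pow[OF _ S(1)] inv_eq_pow_order_minus_one[OF fin] S(1) by auto
      then show ?case by blast
    next
      case (eng h1 h2)
      then obtain a b where "h1 \<in> ?f a" "h2 \<in> ?f b" by blast
      then have "h1 \<otimes> h2 \<in> ?f (a + b)"
        using set_mult_pow_add[OF S(1), of a b] by (auto simp: set_mult_def)
      then show ?case by blast
    qed
  qed
  then show ?thesis
    using union set_mult_pow_subset_generate[OF S(1)] by blast
qed

lemma word_image_generate:
  assumes fin: "finite (carrier G)" and w: "free_word d w" "d \<ge> 1"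
    and one: "\<one> \<in> word_image G d w"
  shows "\<exists>d' \<ge> 1. \<exists>w'. free_word d' w' \<and> word_image G d' w' = generate G (word_image G d w)"
proof -
  let ?n = "card (carrier G)"
  have "?n * d \<ge> 1"
    using fin w(2) by (auto simp: Suc_le_eq card_gt_0_iff)
  moreover have "word_image G (?n * d) (power_word d w ?n) = generate G (word_image G d w)"
    using generate_eq_set_mult_pow[OF fin word_image_subset_carrier[OF w(1)] one]
      word_image_power_word[OF w(1)] by simp
  ultimately show ?thesis
    using free_word_power_word[OF w(1), of ?n] by metis
qed

end

lemma (in group_action) prime_dvd_card_non_fixed_points:
  assumes p: "Factorial_Ring.prime p" and ord: "order G = p ^ n" and fin: "finite E"
  shows "p dvd card (E - {x \<in> E. \<forall>g \<in> carrier G. \<phi> g x = x})"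
proof -
  interpret group G using group_hom group_hom.axioms(1) by auto
  define F where "F = {x \<in> E. \<forall>g \<in> carrier G. \<phi> g x = x}"
  have orbit_fixed: "orb = {y}" if "y \<in> F" "orb = orbit G \<phi> y" for y orb
    using that by (auto simp: orbit_def F_def) (metis one_closed)
  have orbit_non_fixed: "orb \<inter> F = {}"
    if y: "y \<in> E" "y \<notin> F" and orb: "orb = orbit G \<phi> y" for y orb
  proof (intro equals0I)
    fix x assume "x \<in> orb \<inter> F"
    then obtain g where g: "g \<in> carrier G" "\<phi> g y = x" and "x \<in> F"
      using orb by (auto simp: orbit_def)
    then have "\<phi> (inv g) x = y" "\<phi> (inv g) x = x"
      using orbit_sym_aux[OF g(1) y(1) g(2)] by (auto simp: F_def)
    then show False using \<open>x \<in> F\<close> y(2) by simp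
  qed
  define f where "f x = (if x \<in> F then 0 else 1::nat)" for x
  have "card (E - F) = (\<Sum>x \<in> E. f x)"
    using fin by (simp add: f_def sum.If_cases Diff_eq)
  also have "\<dots> = (\<Sum>orb \<in> orbits G E \<phi>. \<Sum>x \<in> orb. f x)"
    by (rule disjoint_sum[OF fin, symmetric])
  also have "p dvd \<dots>"
  proof (rule dvd_sum)
    fix orb assume "orb \<in> orbits G E \<phi>"
    then obtain y where y: "y \<in> E" and orb: "orb = orbit G \<phi> y" by (auto simp: orbits_def)
    show "p dvd (\<Sum>x \<in> orb. f x)"
    proof (cases "y \<in> F")
      case True
      then show ?thesis using orbit_fixed[OF True orb] by (simp add: f_def)
    next
      case False
      have "card orb dvd p ^ n"
        using orbit_stabilizer_theorem[OF y] ord orb by (metis dvd_triv_left)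
      then obtain i where i: "card orb = p ^ i"
        using divides_primepow_nat[OF p] by blast
      have "i \<noteq> 0"
      proof
        assume "i = 0"
        moreover have "y \<in> orb" using orbit_refl[OF y] orb by simp
        ultimately have "orb = {y}" using i by (metis card_1_singletonE power_0 singletonD)
        then show False using False y orb by (auto simp: orbit_def F_def)
      qed
      moreover have "(\<Sum>x \<in> orb. f x) = card orb"
        using orbit_non_fixed[OF y False orb] by (simp add: f_def disjoint_iff)
      ultimately show ?thesis
        using i by simp
    qed
  qed
  finally show ?thesis unfolding F_def .
qed

lemma (in group) subgroup_rcosets_action:
  assumes M: "subgroup M G"
  shows "group_action (G\<lparr>carrier := M\<rparr>) (rcosets M) (\<lambda>m. \<lambda>C \<in> rcosets M. C #> inv m)"
    (is "group_action ?H ?E ?\<phi>")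
proof -
  have Msub: "M \<subseteq> carrier G"
    using M subgroup.subset by blast
  have closed: "C #> a \<in> ?E" if "C \<in> ?E" "a \<in> carrier G" for C a
    using that Msub by (auto simp: RCOSETS_def coset_mult_assoc)
  have carrier: "C \<subseteq> carrier G" if "C \<in> ?E" for C
    using that M by (simp add: subgroup.rcosets_carrier)
  have bij: "?\<phi> m \<in> Bij ?E" if "m \<in> M" for m
  proof -
    have m: "m \<in> carrier G" using that Msub by auto
    have "bij_betw (\<lambda>C. C #> inv m) ?E ?E"
      by (rule bij_betw_byWitness[where f'="\<lambda>C. C #> m"])
        (use m carrier closed in \<open>auto simp: coset_mult_assoc\<close>)
    then show ?thesis
      by (simp add: Bij_def)
  qed
  show ?thesis
    unfolding group_action_def
  proof (intro group_hom.intro group_hom_axioms.intro homI)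
    show "group ?H"
      using M by (simp add: subgroup.subgroup_is_group)
    show "group (BijGroup ?E)"
      by (rule group_BijGroup)
    show "?\<phi> m \<in> carrier (BijGroup ?E)" if "m \<in> carrier ?H" for m
      using bij that by (simp add: BijGroup_def)
    fix a b assume "a \<in> carrier ?H" "b \<in> carrier ?H"
    then have ab: "a \<in> M" "b \<in> M" and abc: "a \<in> carrier G" "b \<in> carrier G"
      using Msub by auto
    have "?\<phi> (a \<otimes> b) = compose ?E (?\<phi> a) (?\<phi> b)"
      using closed carrier abc
      by (auto simp: compose_def coset_mult_assoc inv_mult_group fun_eq_iff)
    then show "?\<phi> (a \<otimes>\<^bsub>?H\<^esub> b) = ?\<phi> a \<otimes>\<^bsub>BijGroup ?E\<^esub> ?\<phi> b"
      using bij[OF ab(1)] bij[OF ab(2)] by (simp add: BijGroup_def)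
  qed
qed

text \<open>\<open>M\<close> acts on its cosets with \<open>M\<close> itself fixed; the number of non-fixed cosets and the index
  are both divisible by \<open>p\<close>, so some other coset \<open>M #> x\<close> is fixed, and such an \<open>x\<close> normalizes
  \<open>M\<close>.\<close>
lemma (in group) p_group_normalizer_grows:
  assumes "p_group G p" and M: "subgroup M G" "M \<noteq> carrier G"
  shows "\<exists>x \<in> carrier G - M. \<forall>m \<in> M. x \<otimes> m \<otimes> inv x \<in> M"
proof -
  obtain n where p: "Factorial_Ring.prime p" and fin: "finite (carrier G)" and ord: "order G = p ^ n"
    using assms(1) by (auto simp: p_group_def)
  define E where "E = rcosets M"
  define \<phi> where "\<phi> = (\<lambda>m. \<lambda>C \<in> E. C #> inv m)"
  define F where "F = {C \<in> E. \<forall>m \<in> M. \<phi> m C = C}"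
  have Msub: "M \<subseteq> carrier G"
    using M subgroup.subset by blast
  have finE: "finite E"
    unfolding E_def using fin M(1)
    by (meson Pow_iff finite_Pow_iff finite_subset subgroup.rcosets_carrier is_group subsetI)
  have lagrange: "card E * card M = p ^ n"
    using lagrange[OF M(1)] ord by (simp add: E_def)
  then obtain j where j: "card M = p ^ j"
    using divides_primepow_nat[OF p] by (metis dvd_triv_right)
  obtain i where i: "card E = p ^ i"
    using lagrange divides_primepow_nat[OF p] by (metis dvd_triv_left)
  have "i \<noteq> 0"
  proof
    assume "i = 0"
    then have "card M = card (carrier G)"
      using lagrange i ord by (simp add: order_def)
    then show False
      using Msub fin M(2) by (simp add: card_subset_eq)
  qed
  then have "p dvd card E"
    using i by simp
  moreover have "p dvd card (E - F)"
    using group_action.prime_dvd_card_non_fixed_points[OF subgroup_rcosets_action[OF M(1)] p _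
        finE[unfolded E_def]] j
    by (simp add: E_def \<phi>_def F_def order_def)
  moreover have "card E = card F + card (E - F)"
    using finE by (simp add: F_def card_Diff_subset card_mono)
  ultimately have "p dvd card F"
    by (metis dvd_add_right_iff add.commute)
  have "M \<in> F"
    using M(1) Msub rcosetsI[OF Msub one_closed]
    by (auto simp: F_def E_def \<phi>_def coset_join2 subgroup.m_inv_closed subgroup.mem_carrier)
  then have "card F \<noteq> 0"
    using finE by (auto simp: F_def)
  then have "card F \<ge> p"
    using \<open>p dvd card F\<close> by (simp add: dvd_imp_le)
  then have "\<not> F \<subseteq> {M}"
    using prime_ge_2_nat[OF p] card_mono[of "{M}" F] by auto
  then obtain x where x: "x \<in> carrier G" "M #> x \<in> F" "M #> x \<noteq> M"
    by (auto simp: F_def E_def RCOSETS_def)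
  have "x \<notin> M"
    using x M(1) coset_join2 by blast
  moreover have "x \<otimes> m \<otimes> inv x \<in> M" if m: "m \<in> M" for m
  proof -
    have "M #> x #> m = M #> x"
      using x(2) M(1) m Msub
      by (auto simp: F_def \<phi>_def dest!: bspec[of _ _ "inv m"] intro: subgroup.m_inv_closed)
    moreover have "m \<in> carrier G"
      using m Msub by blast
    ultimately have "x \<otimes> m \<in> M #> x"
      using Msub x(1) rcos_self[OF _ M(1), of "x \<otimes> m"] by (simp add: coset_mult_assoc)
    then show ?thesis
      using subgroup.rcos_module_imp[OF M(1) is_group x(1)] by simp
  qed
  ultimately show ?thesis
    using x(1) by blast
qed

lemma (in group) finite_subgroupI:
  assumes fin: "finite (carrier G)" and S: "S \<subseteq> carrier G" "\<one> \<in> S"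
    and mult: "\<And>x y. x \<in> S \<Longrightarrow> y \<in> S \<Longrightarrow> x \<otimes> y \<in> S"
  shows "subgroup S G"
proof (rule subgroupI)
  fix a assume "a \<in> S"
  have "a [^] (k::nat) \<in> S" for k
    by (induction k) (auto simp: S(2) mult \<open>a \<in> S\<close>)
  then show "inv a \<in> S"
    using inv_eq_pow_order_minus_one[OF fin] S(1) \<open>a \<in> S\<close> by auto
qed (use S mult in auto)

lemma (in group) p_group_maximal_subgroup_normal:
  assumes pg: "p_group G p" and M: "maximal_subgroup M G"
  shows "M \<lhd> G"
proof -
  have fin: "finite (carrier G)"
    using pg by (simp add: p_group_def)
  have sub: "subgroup M G" and proper: "M \<noteq> carrier G"
    and max: "\<And>K. subgroup K G \<Longrightarrow> M \<subseteq> K \<Longrightarrow> K \<noteq> carrier G \<Longrightarrow> K = M"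
    using M by (auto simp: maximal_subgroup_def)
  have Msub: "M \<subseteq> carrier G"
    using sub subgroup.subset by blast
  define N where "N = {y \<in> carrier G. \<forall>m \<in> M. y \<otimes> m \<otimes> inv y \<in> M}"
  have "subgroup N G"
  proof (rule finite_subgroupI[OF fin])
    show "N \<subseteq> carrier G" "\<one> \<in> N"
      using Msub by (auto simp: N_def)
    fix y z assume "y \<in> N" "z \<in> N"
    moreover have "y \<otimes> z \<otimes> m \<otimes> inv (y \<otimes> z) = y \<otimes> (z \<otimes> m \<otimes> inv z) \<otimes> inv y"
      if "y \<in> carrier G" "z \<in> carrier G" "m \<in> M" for m
      using that Msub by (simp add: m_assoc inv_mult_group subset_iff)
    ultimately show "y \<otimes> z \<in> N"
      by (auto simp: N_def)
  qed
  moreover have "M \<subseteq> N"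
    using sub Msub by (auto simp: N_def subgroup.m_closed subgroup.m_inv_closed)
  moreover have "N \<noteq> M"
    using p_group_normalizer_grows[OF pg sub proper] by (auto simp: N_def)
  ultimately have "N = carrier G"
    using max by blast
  then show ?thesis
    using sub by (auto simp: normal_inv_iff N_def)
qed

text \<open>For normal \<open>H\<close> this is the subgroup \<open>H\<langle>h\<rangle>\<close>.\<close>
definition cyclic_extension :: "('a, 'b) monoid_scheme \<Rightarrow> 'a set \<Rightarrow> 'a \<Rightarrow> 'a set" where
  "cyclic_extension G H h = {y \<in> carrier G. \<exists>k::int. H #>\<^bsub>G\<^esub> y = H #>\<^bsub>G\<^esub> h [^]\<^bsub>G\<^esub> k}"

context normal
begin

lemma group_hom_rcos: "group_hom G (G Mod H) (\<lambda>a. H #> a)"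
  by (intro group_hom.intro group_hom_axioms.intro is_group factorgroup_is_group r_coset_hom_Mod)

lemma subset_cyclic_extension: "H \<subseteq> cyclic_extension G H h"
proof
  fix x assume "x \<in> H"
  then have "x \<in> carrier G" "H #> x = H #> h [^] (0::int)"
    using subset coset_join2[OF _ is_subgroup] by auto
  then show "x \<in> cyclic_extension G H h"
    unfolding cyclic_extension_def by blast
qed

lemma mem_cyclic_extension: "h \<in> carrier G \<Longrightarrow> h \<in> cyclic_extension G H h"
  by (auto simp: cyclic_extension_def intro: exI[of _ 1])

lemma cyclic_extension_subgroup:
  assumes h: "h \<in> carrier G"
  shows "subgroup (cyclic_extension G H h) G"
proof -
  interpret \<pi>: group_hom G "G Mod H" "\<lambda>a. H #> a"
    by (rule group_hom_rcos)
  show ?thesis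
  proof (rule subgroupI)
    show "cyclic_extension G H h \<subseteq> carrier G" "cyclic_extension G H h \<noteq> {}"
      using mem_cyclic_extension[OF h] by (auto simp: cyclic_extension_def)
  next
    fix y assume "y \<in> cyclic_extension G H h"
    then obtain k :: int where y: "y \<in> carrier G" "H #> y = H #> h [^] k"
      by (auto simp: cyclic_extension_def)
    have "H #> inv y = inv\<^bsub>G Mod H\<^esub> (H #> h [^] k)"
      using y by simp
    also have "\<dots> = H #> h [^] (- k)"
      using h by (simp add: int_pow_neg)
    finally have "H #> inv y = H #> h [^] (- k)" .
    then show "inv y \<in> cyclic_extension G H h"
      using y by (auto simp: cyclic_extension_def)
  next
    fix y z assume "y \<in> cyclic_extension G H h" "z \<in> cyclic_extension G H h"
    then obtain a b :: int where y: "y \<in> carrier G" "H #> y = H #> h [^] a"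
      and z: "z \<in> carrier G" "H #> z = H #> h [^] b"
      by (auto simp: cyclic_extension_def)
    have "H #> (y \<otimes> z) = (H #> h [^] a) \<otimes>\<^bsub>G Mod H\<^esub> (H #> h [^] b)"
      using y z by simp
    also have "\<dots> = H #> h [^] (a + b)"
      using h by (simp add: int_pow_mult)
    finally have "H #> (y \<otimes> z) = H #> h [^] (a + b)" .
    then show "y \<otimes> z \<in> cyclic_extension G H h"
      using y z by (auto simp: cyclic_extension_def)
  qed
qed

end

lemma (in group) int_pow_coprime_mem_subgroup:
  fixes a b :: int
  assumes L: "subgroup L G" and x: "x \<in> carrier G"
    and a: "x [^] a \<in> L" and b: "x [^] b \<in> L" and "coprime a b"
  shows "x \<in> L"
proof -
  obtain u v :: int where "a * u + b * v = 1"
    using bezout_int[of a b] \<open>coprime a b\<close> by (metis coprime_iff_gcd_eq_1 mult.commute)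
  then have "x = x [^] (a * u + b * v)"
    using x by simp
  also have "\<dots> = (x [^] a) [^] u \<otimes> (x [^] b) [^] v"
    using x by (simp add: int_pow_mult int_pow_pow)
  also have "\<dots> \<in> L"
    using a b L by (simp add: subgroup_int_pow_closed subgroup.m_closed)
  finally show ?thesis .
qed

lemma (in group) maximal_normal_cyclic_extension_eq_carrier:
  assumes "H \<lhd> G" "maximal_subgroup H G" "h \<in> carrier G" "h \<notin> H"
  shows "cyclic_extension G H h = carrier G"
proof -
  have "subgroup (cyclic_extension G H h) G" "H \<subseteq> cyclic_extension G H h"
    "h \<in> cyclic_extension G H h"
    using normal.cyclic_extension_subgroup[OF assms(1,3)] normal.subset_cyclic_extension[OF assms(1)]
      normal.mem_cyclic_extension[OF assms(1,3)] by auto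
  then show ?thesis
    using assms(2,4) unfolding maximal_subgroup_def by blast
qed

lemma (in group) commutator_int_pows_eq_one:
  assumes "g \<in> carrier G"
  shows "g [^] (a::int) \<otimes> g [^] (b::int) \<otimes> inv (g [^] a) \<otimes> inv (g [^] b) = \<one>"
proof -
  have "g [^] a \<otimes> g [^] b \<otimes> inv (g [^] a) \<otimes> inv (g [^] b)
      = g [^] a \<otimes> g [^] b \<otimes> g [^] (- a) \<otimes> g [^] (- b)"
    using assms by (simp add: int_pow_neg)
  also have "\<dots> = g [^] (a + b + - a + - b)"
    using assms by (simp only: int_pow_mult)
  finally show ?thesis by simp
qed

lemma coprime_one_minus_mult_prime_power:
  fixes p k :: int
  assumes "Factorial_Ring.prime p"
  shows "coprime (1 - p * k) (p ^ n)"
proof (rule prime_imp_power_coprime[OF assms])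
  show "\<not> p dvd 1 - p * k"
  proof
    assume "p dvd 1 - p * k"
    then have "p dvd (1 - p * k) + p * k"
      by (rule dvd_add) simp
    then have "p dvd 1"
      by simp
    then show False
      using assms not_prime_unit by blast
  qed
qed

lemma (in group) p_group_maximal_subgroup_contains:
  assumes pg: "p_group G p" and M: "maximal_subgroup M G"
    and x: "x \<in> carrier G" and y: "y \<in> carrier G"
  shows "x [^] p \<in> M" "x \<otimes> y \<otimes> inv x \<otimes> inv y \<in> M"
proof -
  obtain n where p: "Factorial_Ring.prime p" and ord: "order G = p ^ n"
    using pg by (auto simp: p_group_def)
  have normal: "M \<lhd> G"
    by (rule p_group_maximal_subgroup_normal[OF pg M])
  interpret normal M G
    by (rule normal)
  interpret \<pi>: group_hom G "G Mod M" "\<lambda>a. M #> a"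
    by (rule group_hom_rcos)
  obtain g where g: "g \<in> carrier G" "g \<notin> M"
    using M subset by (auto simp: maximal_subgroup_def)
  have gen: "\<exists>a::int. M #> z = M #> g [^] a" if "z \<in> carrier G" for z
  proof -
    have "z \<in> cyclic_extension G M g"
      using maximal_normal_cyclic_extension_eq_carrier[OF normal M g] that by (simp only:)
    then show ?thesis
      unfolding cyclic_extension_def by blast
  qed
  obtain a :: int where a: "M #> x = M #> g [^] a"
    using gen[OF x] ..
  obtain b :: int where b: "M #> y = M #> g [^] b"
    using gen[OF y] ..
  have "M #> (x \<otimes> y \<otimes> inv x \<otimes> inv y)
      = M #> (g [^] a \<otimes> g [^] b \<otimes> inv (g [^] a) \<otimes> inv (g [^] b))"
    using x y g a b by simp
  also have "\<dots> = M"
    using g by (simp add: commutator_int_pows_eq_one)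
  finally show "x \<otimes> y \<otimes> inv x \<otimes> inv y \<in> M"
    by (rule coset_join1) (use x y is_subgroup in auto)
  have "g [^] p \<in> M"
  proof (rule ccontr)
    assume "g [^] p \<notin> M"
    then have "cyclic_extension G M (g [^] p) = carrier G"
      by (rule maximal_normal_cyclic_extension_eq_carrier[OF normal M nat_pow_closed[OF g(1)]])
    then have "g \<in> cyclic_extension G M (g [^] p)"
      using g(1) by (simp only:)
    then obtain k :: int where "M #> g = M #> (g [^] p) [^] k"
      unfolding cyclic_extension_def by blast
    also have "(g [^] p) [^] k = g [^] (int p * k)"
      using int_pow_pow[OF g(1), of "int p" k] by (simp add: int_pow_int)
    finally have eq: "M #> g [^] (int p * k) = M #> g" ..
    have "g [^] (1 - int p * k) = g \<otimes> inv (g [^] (int p * k))"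
      using int_pow_diff[OF g(1), of 1 "int p * k"] g(1) by simp
    then have "M #> g [^] (1 - int p * k) = (M #> g) \<otimes>\<^bsub>G Mod M\<^esub> inv\<^bsub>G Mod M\<^esub> (M #> g [^] (int p * k))"
      using g(1) by simp
    also have "\<dots> = (M #> g) \<otimes>\<^bsub>G Mod M\<^esub> inv\<^bsub>G Mod M\<^esub> (M #> g)"
      by (simp only: eq)
    also have "\<dots> = M"
      using \<pi>.H.r_inv[OF \<pi>.hom_closed[OF g(1)]] by simp
    finally have "g [^] (1 - int p * k) \<in> M"
      by (rule coset_join1) (use g(1) is_subgroup in auto)
    moreover have "g [^] (int p ^ n) \<in> M"
      using pow_order_eq_1[OF g(1)] ord int_pow_int[of G g "p ^ n"] by simp
    moreover have "coprime (1 - int p * k) (int p ^ n)"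
      using p by (intro coprime_one_minus_mult_prime_power) (simp add: prime_nat_int_transfer)
    ultimately show False
      using int_pow_coprime_mem_subgroup[OF subgroup_axioms g(1)] g(2) by blast
  qed
  have swap: "(g [^] a) [^] p = (g [^] p) [^] a"
    using int_pow_pow[OF g(1), of a "int p"] int_pow_pow[OF g(1), of "int p" a]
    by (simp add: int_pow_int mult.commute)
  have "M #> x [^] p = (M #> x) [^]\<^bsub>G Mod M\<^esub> p"
    by (rule \<pi>.hom_nat_pow[OF x])
  also have "\<dots> = (M #> g [^] a) [^]\<^bsub>G Mod M\<^esub> p"
    by (simp only: a)
  also have "\<dots> = M #> (g [^] p) [^] a"
    using \<pi>.hom_nat_pow[of "g [^] a" p] g(1) by (simp add: swap)
  also have "\<dots> = M"
    using \<open>g [^] p \<in> M\<close> g(1)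
    by (intro coset_join2 is_subgroup subgroup_int_pow_closed[OF is_subgroup]) auto
  finally show "x [^] p \<in> M"
    by (rule coset_join1) (use x is_subgroup in auto)
qed

lemma (in group) normal_if_commutators_mem:
  assumes K: "subgroup K G"
    and comm: "\<And>x y. x \<in> carrier G \<Longrightarrow> y \<in> carrier G \<Longrightarrow> x \<otimes> y \<otimes> inv x \<otimes> inv y \<in> K"
  shows "K \<lhd> G"
proof -
  have "x \<otimes> k \<otimes> inv x \<in> K" if x: "x \<in> carrier G" and k: "k \<in> K" for x k
  proof -
    have kc: "k \<in> carrier G"
      using subgroup.mem_carrier[OF K k] .
    have "x \<otimes> k \<otimes> inv x = (x \<otimes> k \<otimes> inv x \<otimes> inv k) \<otimes> k"
      using x kc by (simp add: m_assoc)
    also have "\<dots> \<in> K"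
      using subgroup.m_closed[OF K comm[OF x kc] k] .
    finally show ?thesis .
  qed
  then show ?thesis
    using K by (simp add: normal_inv_iff)
qed

text \<open>If \<open>H \<subset> L\<close> with \<open>h \<notin> L\<close>, then \<open>g\<close> lies in \<open>H\<langle>h\<rangle>\<close>, so \<open>H g = H h\<^sup>a\<close>; \<open>p \<bar> a\<close> would put
  \<open>g\<close> into \<open>H\<close>, otherwise \<open>h\<^sup>a, h\<^sup>p \<in> L\<close> force \<open>h \<in> L\<close>.\<close>
lemma (in normal) maximal_subgroupI_avoiding:
  fixes p :: nat
  assumes p: "Factorial_Ring.prime p" and pow: "\<And>x. x \<in> carrier G \<Longrightarrow> x [^] p \<in> H"
    and g: "g \<in> carrier G" "g \<notin> H"
    and max: "\<And>L. subgroup L G \<Longrightarrow> H \<subset> L \<Longrightarrow> g \<in> L"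
  shows "maximal_subgroup H G"
  unfolding maximal_subgroup_def
proof (intro conjI allI impI)
  show "subgroup H G" "H \<noteq> carrier G"
    using is_subgroup g by auto
  fix L assume L: "subgroup L G \<and> H \<subseteq> L \<and> L \<noteq> carrier G"
  show "L = H"
  proof (rule ccontr)
    assume "L \<noteq> H"
    then have "g \<in> L"
      using L max by blast
    obtain h where h: "h \<in> carrier G" "h \<notin> L"
      using L subgroup.subset by blast
    then have "H \<subset> cyclic_extension G H h"
      using L subset_cyclic_extension mem_cyclic_extension by blast
    then have "g \<in> cyclic_extension G H h"
      using max cyclic_extension_subgroup[OF h(1)] by blast
    then obtain a :: int where a: "H #> g = H #> h [^] a"
      by (auto simp: cyclic_extension_def)
    have hp: "h [^] int p \<in> H"
      using pow[OF h(1)] by (simp add: int_pow_int)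
    show False
    proof (cases "int p dvd a")
      case True
      then obtain t where "a = int p * t"
        by (elim dvdE)
      then have "h [^] a = (h [^] int p) [^] t"
        using h(1) by (simp add: int_pow_pow)
      then have "h [^] a \<in> H"
        using hp subgroup_int_pow_closed[OF is_subgroup] by simp
      then have "H #> g = H"
        using a h(1) by (simp add: coset_join2[OF _ is_subgroup])
      then show False
        using coset_join1[OF _ g(1) is_subgroup] g(2) by blast
    next
      case False
      have "h [^] a \<in> H #> g"
        using a h(1) rcos_self[OF _ is_subgroup] by simp
      then obtain k where "k \<in> H" "h [^] a = k \<otimes> g"
        by (auto simp: r_coset_def)
      then have "h [^] a \<in> L"
        using L \<open>g \<in> L\<close> subgroup.m_closed[of L G k g] by auto
      moreover have "h [^] int p \<in> L"
        using hp L by auto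
      moreover have "coprime (int p) a"
        using False p by (intro prime_imp_coprime) (simp_all add: prime_nat_int_transfer)
      ultimately have "h \<in> L"
        using int_pow_coprime_mem_subgroup[of L h a "int p"] L h(1) by (simp add: coprime_commute)
      then show False
        using h(2) by blast
    qed
  qed
qed

lemma (in group) exists_maximal_subgroup_avoiding:
  fixes p :: nat
  assumes fin: "finite (carrier G)" and p: "Factorial_Ring.prime p" and N: "subgroup N G"
    and pow: "\<And>x. x \<in> carrier G \<Longrightarrow> x [^] p \<in> N"
    and comm: "\<And>x y. x \<in> carrier G \<Longrightarrow> y \<in> carrier G \<Longrightarrow> x \<otimes> y \<otimes> inv x \<otimes> inv y \<in> N"
    and g: "g \<in> carrier G" "g \<notin> N"
  shows "\<exists>M. maximal_subgroup M G \<and> g \<notin> M"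
proof -
  define \<K> where "\<K> = {K. subgroup K G \<and> N \<subseteq> K \<and> g \<notin> K}"
  have "finite \<K>"
    using fin by (auto simp: \<K>_def dest: subgroup.subset intro: finite_subset[of _ "Pow (carrier G)"])
  moreover have "N \<in> \<K>"
    using N g by (simp add: \<K>_def)
  ultimately obtain K where "K \<in> \<K>" and K_max: "\<And>L. L \<in> \<K> \<Longrightarrow> K \<subseteq> L \<Longrightarrow> K = L"
    using finite_has_maximal[of \<K>] by blast
  then have K: "subgroup K G" "N \<subseteq> K" "g \<notin> K"
    by (auto simp: \<K>_def)
  have "K \<lhd> G"
    using normal_if_commutators_mem[OF K(1)] comm K(2) by blast
  moreover have "x [^] p \<in> K" if "x \<in> carrier G" for x
    using pow[OF that] K(2) by blast
  moreover have "g \<in> L" if "subgroup L G" "K \<subset> L" for L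
    using that K K_max[of L] by (auto simp: \<K>_def)
  ultimately have "maximal_subgroup K G"
    using normal.maximal_subgroupI_avoiding[OF _ p _ g(1) K(3)] by blast
  then show ?thesis
    using K(3) by blast
qed

definition commutator_word :: "(nat \<times> bool) list" where
  "commutator_word = [(0, True), (1, True), (0, False), (1, False)]"

definition frattini_word :: "nat \<Rightarrow> (nat \<times> bool) list" where
  "frattini_word p = replicate p (0, True) @ shift_word 1 commutator_word"

lemma free_word_commutator_word: "free_word 2 commutator_word"
  by (simp add: commutator_word_def)

lemma free_word_frattini_word: "free_word 3 (frattini_word p)"
proof -
  have "free_word 3 (replicate p (0, True))"
    by (auto simp: free_word_def)
  moreover have "free_word 3 (shift_word 1 commutator_word)"
    using free_word_shift[OF free_word_commutator_word, of 1] by (simp add: numeral_3_eq_3)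
  ultimately show ?thesis
    by (simp add: frattini_word_def)
qed

context group
begin

lemma word_image_commutator_word: "word_image G 2 commutator_word = derived_set G (carrier G)"
proof (intro equalityI subsetI)
  fix x assume "x \<in> word_image G 2 commutator_word"
  then obtain g where g: "g \<in> {..<2} \<rightarrow> carrier G" "x = word_eval G g commutator_word"
    by (rule word_imageE)
  then have "g 0 \<in> carrier G" "g 1 \<in> carrier G"
    by auto
  moreover have "x = g 0 \<otimes> g 1 \<otimes> inv (g 0) \<otimes> inv (g 1)"
    using g calculation by (simp add: commutator_word_def letter_eval_def m_assoc)
  ultimately show "x \<in> derived_set G (carrier G)"
    by blast
next
  fix x assume "x \<in> derived_set G (carrier G)"
  then obtain a b where ab: "a \<in> carrier G" "b \<in> carrier G" "x = a \<otimes> b \<otimes> inv a \<otimes> inv b"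
    by blast
  define g where "g i = (if i = 0 then a else b)" for i :: nat
  have "g \<in> {..<2} \<rightarrow> carrier G"
    using ab by (simp add: g_def)
  moreover have "word_eval G g commutator_word = x"
    using ab by (simp add: g_def commutator_word_def letter_eval_def m_assoc)
  ultimately show "x \<in> word_image G 2 commutator_word"
    using word_imageI by metis
qed

lemma word_image_replicate: "word_image G 1 (replicate n (0, True)) = {x [^] n | x. x \<in> carrier G}"
proof -
  have eval: "word_eval G g (replicate n (0, True)) = g 0 [^] n" if "g 0 \<in> carrier G" for g
    using that by (induction n) (simp_all add: letter_eval_def nat_pow_Suc2[symmetric])
  show ?thesis
  proof (intro equalityI subsetI)
    fix x assume "x \<in> word_image G 1 (replicate n (0, True))"
    then obtain g where "g \<in> {..<1} \<rightarrow> carrier G" "x = word_eval G g (replicate n (0, True))"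
      by (rule word_imageE)
    then show "x \<in> {x [^] n | x. x \<in> carrier G}"
      using eval by auto
  next
    fix x assume "x \<in> {x [^] n | x. x \<in> carrier G}"
    then obtain a where "a \<in> carrier G" "x = a [^] n"
      by blast
    then show "x \<in> word_image G 1 (replicate n (0, True))"
      using word_imageI[of "\<lambda>_. a" 1 "replicate n (0, True)"] eval[of "\<lambda>_. a"] by auto
  qed
qed

lemma word_image_frattini_word:
  "word_image G 3 (frattini_word p) = {x [^] p | x. x \<in> carrier G} <#> derived_set G (carrier G)"
proof -
  have "word_image G (1 + 2) (replicate p (0, True) @ shift_word 1 commutator_word)
      = word_image G 1 (replicate p (0, True)) <#> word_image G 2 commutator_word"
    by (rule word_image_append_shift) (auto simp: free_word_def commutator_word_def)
  then show ?thesis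
    unfolding word_image_replicate word_image_commutator_word
    by (simp add: frattini_word_def numeral_3_eq_3)
qed

lemma generate_set_mult:
  assumes "A \<subseteq> carrier G" "B \<subseteq> carrier G" "\<one> \<in> A" "\<one> \<in> B"
  shows "generate G (A <#> B) = generate G (A \<union> B)"
proof
  have "A <#> B \<subseteq> generate G (A \<union> B)"
    by (auto simp: set_mult_def intro: generate.incl generate.eng)
  then show "generate G (A <#> B) \<subseteq> generate G (A \<union> B)"
    using assms(1,2) by (intro generate_subgroup_incl generate_is_subgroup) auto
  have "A \<union> B \<subseteq> A <#> B"
    using assms by (force simp: set_mult_def)
  then show "generate G (A \<union> B) \<subseteq> generate G (A <#> B)"
    by (rule mono_generate)
qed

lemma p_group_frattini_eq:
  assumes pg: "p_group G p"
  shows "frattini G = generate G ({x [^] p | x. x \<in> carrier G} \<union> derived_set G (carrier G))"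
    (is "_ = generate G ?S")
proof
  have p: "Factorial_Ring.prime p" and fin: "finite (carrier G)"
    using pg by (auto simp: p_group_def)
  have sub: "subgroup (generate G ?S) G"
    by (rule generate_is_subgroup) auto
  show "frattini G \<subseteq> generate G ?S"
  proof
    fix g assume g: "g \<in> frattini G"
    show "g \<in> generate G ?S"
    proof (rule ccontr)
      assume "g \<notin> generate G ?S"
      moreover have "g \<in> carrier G"
        using g by (simp add: frattini_def)
      moreover have "x [^] p \<in> generate G ?S" if "x \<in> carrier G" for x
        using that by (blast intro: generate.incl)
      moreover have "x \<otimes> y \<otimes> inv x \<otimes> inv y \<in> generate G ?S"
        if "x \<in> carrier G" "y \<in> carrier G" for x y
        using that by (blast intro: generate.incl)
      ultimately obtain M where "maximal_subgroup M G" "g \<notin> M"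
        using exists_maximal_subgroup_avoiding[OF fin p sub] by blast
      then show False
        using g by (auto simp: frattini_def)
    qed
  qed
  have "generate G ?S \<subseteq> M" if M: "maximal_subgroup M G" for M
    using M p_group_maximal_subgroup_contains[OF pg M]
    by (intro generate_subgroup_incl) (auto simp: maximal_subgroup_def)
  moreover have "generate G ?S \<subseteq> carrier G"
    using sub subgroup.subset by blast
  ultimately show "generate G ?S \<subseteq> frattini G"
    by (auto simp: frattini_def)
qed

lemma exists_word_image_derived:
  assumes fin: "finite (carrier G)"
  shows "\<exists>d \<ge> 1. \<exists>w. free_word d w \<and> word_image G d w = derived G (carrier G)"
proof -
  have "\<one> \<otimes> \<one> \<otimes> inv \<one> \<otimes> inv \<one> \<in> derived_set G (carrier G)"
    by blast
  then have "\<one> \<in> word_image G 2 commutator_word"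
    by (simp add: word_image_commutator_word)
  then show ?thesis
    using word_image_generate[OF fin free_word_commutator_word]
    by (simp add: word_image_commutator_word derived_def)
qed

lemma exists_word_image_frattini:
  assumes "p_group G p"
  shows "\<exists>d \<ge> 1. \<exists>w. free_word d w \<and> word_image G d w = frattini G"
proof -
  have fin: "finite (carrier G)"
    using assms by (simp add: p_group_def)
  have "\<one> [^] p \<in> {x [^] p | x. x \<in> carrier G}"
    by blast
  then have one_pow: "\<one> \<in> {x [^] p | x. x \<in> carrier G}"
    by simp
  have "\<one> \<otimes> \<one> \<otimes> inv \<one> \<otimes> inv \<one> \<in> derived_set G (carrier G)"
    by blast
  then have one_comm: "\<one> \<in> derived_set G (carrier G)"
    by simp
  have "\<one> \<otimes> \<one> \<in> {x [^] p | x. x \<in> carrier G} <#> derived_set G (carrier G)"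
    unfolding set_mult_def using one_pow one_comm by blast
  then have one: "\<one> \<in> word_image G 3 (frattini_word p)"
    by (simp add: word_image_frattini_word)
  have "generate G ({x [^] p | x. x \<in> carrier G} <#> derived_set G (carrier G))
      = generate G ({x [^] p | x. x \<in> carrier G} \<union> derived_set G (carrier G))"
    by (rule generate_set_mult) (use one_pow one_comm in auto)
  then have frattini: "generate G (word_image G 3 (frattini_word p)) = frattini G"
    by (simp add: word_image_frattini_word p_group_frattini_eq[OF assms])
  have "\<exists>d \<ge> 1. \<exists>w. free_word d w \<and> word_image G d w = generate G (word_image G 3 (frattini_word p))"
    by (rule word_image_generate[OF fin free_word_frattini_word]) (simp_all add: one)
  then show ?thesis
    unfolding frattini .
qed

end

theorem lemma5p1:
  fixes G :: "('a, 'b) monoid_scheme"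
  assumes "group G" and "finite (carrier G)"
  shows "(\<exists>d \<ge> 1. \<exists>w. free_word d w \<and> word_image G d w = derived G (carrier G))
    \<and> (\<forall>p. p_group G p \<longrightarrow>
          (\<exists>d' \<ge> 1. \<exists>w'. free_word d' w' \<and> word_image G d' w' = frattini G))"
  using group.exists_word_image_derived[OF assms] group.exists_word_image_frattini[OF assms(1)]
  by blast

end
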